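(* For every ranking profile $R$ over $m$ candidates, the ranking chosen by the Flow-adjusting Borda rule is pair-priceable for $R$. This holds for any choice of maximum flow in each round (the minimization of the cost-per-utility ratio is not needed) and any tie-breaking among Borda maximizers.
   Context: Let $C$ be a set of $m$ candidates. A ranking is a strict linear order over $C$; $\mathcal{R}$ denotes the set of all rankings over $C$. A ranking profile is a function $R:\mathcal{R}\to[0,1]$ with $\sum_\succ R(\succ)=1$. For a ranking $\succ$, $A(\succ)=\{(x,y)\in C\times C:x\succ y\}$. For $x\in X\subseteq C$, $u(\succ,x,X)=|\{y\in X\setminus\{x\}:x\succ y\}|$; for $b:\mathcal{R}\to\mathbb{R}_{\geq0}$, $U(b,x,X)=\sum_\succ b(\succ)u(\succ,x,X)$. Flow-adjusting Borda rule: set $X_1=C$, $b_1(\succ)=R(\succ)\binom{m}{2}$. In round $i=1,\dots,m$: choose $x^*\in\arg\max_{x\in X_i}U(b_i,x,X_i)$, place it at position $i$, set $X_{i+1}=X_i\setminus\{x^*\}$. Build the flow network $G_{x^*}$ with vertices: source $s$, a vertex $v_\succ$ for each $\succ\in\mathcal{R}$, a vertex $v_y$ for each $y\in X_i\setminus\{x^*\}$, sink $t$; edges $(s,v_\succ)$ with capacity $b_i(\succ)$; edges $(v_\succ,v_y)$ with unbounded capacity whenever $x^*\succ y$; edges $(v_y,t)$ with capacity $1$. Let $f$ be a maximum $s$-$t$ flow in $G_{x^*}$ (the rule's default choice is one minimizing $\max_{\succ}\frac{f(s,v_\succ)}{b_i(\succ)u(\succ,x^*,X_i)}$ with $0/0=0$),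 and set $b_{i+1}(\succ)=b_i(\succ)-f(s,v_\succ)$. A ranking $\rhd=x_1,\dots,x_m$ is pair-priceable for $R$ if there is $\pi:\mathcal{R}\times A(\rhd)\to[0,1]$ such that (1) $\pi(\succ,(x_i,x_j))\leq u(\succ,x_i,\{x_i,x_j\})$ for all $\succ$ and $(x_i,x_j)\in A(\rhd)$; (2) $\sum_{(x_i,x_j)\in A(\rhd)}\pi(\succ,(x_i,x_j))\leq\binom{m}{2}R(\succ)$ for all $\succ$; (3) $\sum_\succ\pi(\succ,(x_i,x_j))\leq1$ for all $(x_i,x_j)\in A(\rhd)$; (4) $\sum_\succ\sum_{(x_i,x_j)\in A(\rhd)}\pi(\succ,(x_i,x_j))>\binom{m}{2}-1$. *)

theory Defs
  imports Main "HOL-Library.Extended_Real"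
begin

text \<open>A ranking over the finite candidate set C is a list listing every candidate exactly once;
  earlier position = more preferred.\<close>

definition rankings :: "'a set \<Rightarrow> 'a list set" where
  "rankings C = {r. distinct r \<and> set r = C}"

definition prefers :: "'a list \<Rightarrow> 'a \<Rightarrow> 'a \<Rightarrow> bool" where
  "prefers r x y \<longleftrightarrow> (\<exists>i j. i < j \<and> j < length r \<and> r ! i = x \<and> r ! j = y)"

definition pairs_of :: "'a list \<Rightarrow> ('a \<times> 'a) set" where
  "pairs_of r = {(x, y). prefers r x y}"

definition is_profile :: "'a set \<Rightarrow> ('a list \<Rightarrow> real) \<Rightarrow> bool" where
  "is_profile C R \<longleftrightarrow> (\<forall>r\<in>rankings C. 0 \<le> R r \<and> R r \<le> 1) \<and> (\<Sum>r\<in>rankings C. R r) = 1"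

definition util :: "'a list \<Rightarrow> 'a \<Rightarrow> 'a set \<Rightarrow> nat" where
  "util r x X = card {y \<in> X - {x}. prefers r x y}"

definition Util :: "'a set \<Rightarrow> ('a list \<Rightarrow> real) \<Rightarrow> 'a \<Rightarrow> 'a set \<Rightarrow> real" where
  "Util C b x X = (\<Sum>r\<in>rankings C. b r * real (util r x X))"

definition is_flow :: "'v set \<Rightarrow> ('v \<times> 'v) set \<Rightarrow> ('v \<times> 'v \<Rightarrow> ereal) \<Rightarrow> 'v \<Rightarrow> 'v
    \<Rightarrow> ('v \<times> 'v \<Rightarrow> real) \<Rightarrow> bool" where
  "is_flow V E cap s t f \<longleftrightarrow>
     (\<forall>e. e \<notin> E \<longrightarrow> f e = 0) \<and>
     (\<forall>e\<in>E. 0 \<le> f e \<and> ereal (f e) \<le> cap e) \<and>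
     (\<forall>v\<in>V - {s, t}. (\<Sum>u\<in>V. f (u, v)) = (\<Sum>w\<in>V. f (v, w)))"

definition flow_value :: "'v set \<Rightarrow> 'v \<Rightarrow> ('v \<times> 'v \<Rightarrow> real) \<Rightarrow> real" where
  "flow_value V s f = (\<Sum>w\<in>V. f (s, w)) - (\<Sum>u\<in>V. f (u, s))"

definition is_max_flow :: "'v set \<Rightarrow> ('v \<times> 'v) set \<Rightarrow> ('v \<times> 'v \<Rightarrow> ereal) \<Rightarrow> 'v \<Rightarrow> 'v
    \<Rightarrow> ('v \<times> 'v \<Rightarrow> real) \<Rightarrow> bool" where
  "is_max_flow V E cap s t f \<longleftrightarrow> is_flow V E cap s t f \<and>
     (\<forall>g. is_flow V E cap s t g \<longrightarrow> flow_value V s g \<le> flow_value V s f)"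

datatype 'a vtx = Src | Snk | RkV "'a list" | CdV 'a

definition netV :: "'a set \<Rightarrow> 'a set \<Rightarrow> 'a \<Rightarrow> 'a vtx set" where
  "netV C X x = {Src, Snk} \<union> RkV ` rankings C \<union> CdV ` (X - {x})"

definition netE :: "'a set \<Rightarrow> 'a set \<Rightarrow> 'a \<Rightarrow> ('a vtx \<times> 'a vtx) set" where
  "netE C X x =
     {(Src, RkV r) | r. r \<in> rankings C} \<union>
     {(RkV r, CdV y) | r y. r \<in> rankings C \<and> y \<in> X - {x} \<and> prefers r x y} \<union>
     {(CdV y, Snk) | y. y \<in> X - {x}}"

fun netCap :: "('a list \<Rightarrow> real) \<Rightarrow> 'a vtx \<times> 'a vtx \<Rightarrow> ereal" where
  "netCap b (Src, RkV r) = ereal (b r)"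
| "netCap b (RkV r, CdV y) = \<infinity>"
| "netCap b (CdV y, Snk) = 1"
| "netCap b _ = 0"

text \<open>Rounds are 0-indexed: round i (i < m) uses X_i = C minus the first i chosen candidates
  and budgets b i; xs is the output ranking.\<close>

definition FA_Borda_run :: "'a set \<Rightarrow> ('a list \<Rightarrow> real) \<Rightarrow> 'a list \<Rightarrow> (nat \<Rightarrow> 'a list \<Rightarrow> real)
    \<Rightarrow> bool" where
  "FA_Borda_run C R xs b \<longleftrightarrow>
     length xs = card C \<and>
     b 0 = (\<lambda>r. R r * real (card C choose 2)) \<and>
     (\<forall>i < card C.
        (let X = C - set (take i xs); x = xs ! i in
          x \<in> X \<and> (\<forall>y\<in>X. Util C (b i) y X \<le> Util C (b i) x X) \<and>
          (\<exists>f. is_max_flow (netV C X x) (netE C X x) (netCap (b i)) Src Snk f \<and>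
               (\<forall>r. b (Suc i) r = b i r - f (Src, RkV r)))))"

definition FA_Borda :: "'a set \<Rightarrow> ('a list \<Rightarrow> real) \<Rightarrow> 'a list \<Rightarrow> bool" where
  "FA_Borda C R xs \<longleftrightarrow> (\<exists>b. FA_Borda_run C R xs b)"

definition pair_priceable :: "'a set \<Rightarrow> ('a list \<Rightarrow> real) \<Rightarrow> 'a list \<Rightarrow> bool" where
  "pair_priceable C R rk \<longleftrightarrow>
     (\<exists>\<pi> :: 'a list \<Rightarrow> 'a \<times> 'a \<Rightarrow> real.
        (\<forall>r\<in>rankings C. \<forall>p\<in>pairs_of rk. 0 \<le> \<pi> r p \<and> \<pi> r p \<le> 1) \<and>
        (\<forall>r\<in>rankings C. \<forall>(x, y)\<in>pairs_of rk. \<pi> r (x, y) \<le> real (util r x {x, y})) \<and>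
        (\<forall>r\<in>rankings C. (\<Sum>p\<in>pairs_of rk. \<pi> r p) \<le> real (card C choose 2) * R r) \<and>
        (\<forall>p\<in>pairs_of rk. (\<Sum>r\<in>rankings C. \<pi> r p) \<le> 1) \<and>
        (\<Sum>r\<in>rankings C. \<Sum>p\<in>pairs_of rk. \<pi> r p) > real (card C choose 2) - 1)"

end

theory Submission
  imports Defs
begin

text \<open>Let \<open>n\<^sub>i = m - i\<close> be the number of candidates left before round \<open>i\<close> and \<open>B\<^sub>i\<close> the
  total remaining budget. By induction, \<open>C(n\<^sub>i,2) \<le> B\<^sub>i < C(n\<^sub>i,2) + 1\<close>. Indeed, the flow of
  round \<open>i\<close> is at most \<open>n\<^sub>i - 1\<close>, one unit per remaining candidate. Conversely, a minimum
  cut of the bipartite network consists of a set \<open>S\<close> of candidates and the rankings preferring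
  the chosen candidate \<open>x\<close> to some of the \<open>k\<close> candidates outside \<open>S\<close>; since \<open>x\<close> is a Borda
  winner among the remaining candidates, these rankings own at least a share \<open>(k+1)/(2n\<^sub>i)\<close>
  of the budget, and a short computation shows that the flow exceeds
  \<open>n\<^sub>i - 2 + (B\<^sub>i - C(n\<^sub>i,2))\<close>. Pricing the pair \<open>(x\<^sub>i, y)\<close> for a ranking by the flow that
  the ranking sends to \<open>y\<close> in round \<open>i\<close>, the constraints on single pairs are capacity
  constraints of the networks, each ranking pays exactly the budget it spent, and the total
  payment is \<open>B\<^sub>0 - B\<^sub>m = C(m,2) - B\<^sub>m > C(m,2) - 1\<close>.\<close>

section \<open>Rankings and Borda scores\<close>

lemma finite_rankings: "finite C \<Longrightarrow> finite (rankings C)"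
  unfolding rankings_def
  by (rule finite_subset[OF _ finite_subset_distinct[of C]]) auto

lemma prefers_neq: "distinct r \<Longrightarrow> prefers r x y \<Longrightarrow> x \<noteq> y"
  unfolding prefers_def using nth_eq_iff_index_eq by fastforce

lemma prefers_asym: "distinct r \<Longrightarrow> prefers r x y \<Longrightarrow> \<not> prefers r y x"
  unfolding prefers_def using nth_eq_iff_index_eq
  by (metis less_asym order.strict_trans)

lemma prefers_trans: "distinct r \<Longrightarrow> prefers r x y \<Longrightarrow> prefers r y z \<Longrightarrow> prefers r x z"
  unfolding prefers_def using nth_eq_iff_index_eq
  by (metis order.strict_trans)

lemma prefers_total: "x \<in> set r \<Longrightarrow> y \<in> set r \<Longrightarrow> x \<noteq> y \<Longrightarrow> prefers r x y \<or> prefers r y x"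
  unfolding prefers_def in_set_conv_nth
  by (metis linorder_neqE_nat)

lemma set_drop_eq_image_nth: "set (drop k xs) = (\<lambda>j. xs ! j) ` {k..<length xs}"
proof
  show "set (drop k xs) \<subseteq> (\<lambda>j. xs ! j) ` {k..<length xs}"
    by (auto simp: in_set_conv_nth)
  show "(\<lambda>j. xs ! j) ` {k..<length xs} \<subseteq> set (drop k xs)"
  proof
    fix y assume "y \<in> (\<lambda>j. xs ! j) ` {k..<length xs}"
    then obtain j where "k \<le> j" "j < length xs" "y = xs ! j" by auto
    then show "y \<in> set (drop k xs)"
      unfolding in_set_conv_nth by (intro exI[of _ "j - k"]) auto
  qed
qed

lemma pairs_ofE:
  assumes "p \<in> pairs_of xs"
  obtains i j where "i < j" "j < length xs" "p = (xs ! i, xs ! j)"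
  using assms unfolding pairs_of_def prefers_def by auto

lemma sum_pairs_of:
  assumes "distinct xs"
  shows "(\<Sum>p\<in>pairs_of xs. \<phi> p) = (\<Sum>i<length xs. \<Sum>j\<in>{i<..<length xs}. \<phi> (xs ! i, xs ! j))"
proof -
  define I where "I = (SIGMA i:{..<length xs}. {i<..<length xs})"
  have eq: "pairs_of xs = (\<lambda>(i, j). (xs ! i, xs ! j)) ` I"
    unfolding pairs_of_def prefers_def I_def by (auto simp: image_iff; blast)
  have inj: "inj_on (\<lambda>(i, j). (xs ! i, xs ! j)) I"
    unfolding I_def inj_on_def using assms by (auto simp: nth_eq_iff_index_eq)
  have "(\<Sum>p\<in>pairs_of xs. \<phi> p) = (\<Sum>(i, j)\<in>I. \<phi> (xs ! i, xs ! j))"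
    unfolding eq by (subst sum.reindex[OF inj]) (simp add: case_prod_unfold)
  also have "\<dots> = (\<Sum>i<length xs. \<Sum>j\<in>{i<..<length xs}. \<phi> (xs ! i, xs ! j))"
    unfolding I_def by (rule sum.Sigma[symmetric]) auto
  finally show ?thesis .
qed

lemma sum_inj_on_nat_lower_bound:
  fixes f :: "'b \<Rightarrow> nat"
  assumes "finite Z" "inj_on f Z" "\<forall>y\<in>Z. c \<le> f y"
  shows "real (card Z) * (2 * real c + real (card Z) - 1) \<le> 2 * real (\<Sum>y\<in>Z. f y)"
  using assms
proof (induction "card Z" arbitrary: Z)
  case 0
  then show ?case by simp
next
  case (Suc k)
  then have fin: "finite (f ` Z)" and ne: "Z \<noteq> {}" by auto
  define M where "M = Max (f ` Z)"
  have "M \<in> f ` Z" unfolding M_def using fin ne by simp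
  then obtain y0 where y0: "y0 \<in> Z" "f y0 = M" by auto
  have "f ` Z \<subseteq> {c..M}" using Suc.prems fin unfolding M_def by auto
  then have "card (f ` Z) \<le> card {c..M}" by (rule card_mono[rotated]) simp
  moreover have "card (f ` Z) = Suc k" using Suc.prems Suc.hyps card_image by metis
  ultimately have "real c + real k \<le> real M" by simp
  moreover have "real (card (Z - {y0})) * (2 * real c + real (card (Z - {y0})) - 1)
      \<le> 2 * real (\<Sum>y\<in>Z - {y0}. f y)"
    using Suc y0 by (intro Suc.hyps(1)) (auto intro: inj_on_subset)
  moreover have "card (Z - {y0}) = k" using Suc.hyps y0 by simp
  moreover have "(\<Sum>y\<in>Z. f y) = f y0 + (\<Sum>y\<in>Z - {y0}. f y)"
    using Suc.prems(1) y0(1) by (simp add: sum.remove)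
  ultimately show ?case using y0(2) Suc.hyps(2)[symmetric] by (simp add: algebra_simps)
qed

lemma util_less:
  assumes "distinct r" "finite X" "y \<in> X" "y' \<in> X" "prefers r y y'"
  shows "util r y' X < util r y X"
proof -
  have "{z \<in> X - {y'}. prefers r y' z} \<subset> {z \<in> X - {y}. prefers r y z}"
    using assms prefers_trans[OF assms(1,5)] prefers_asym[OF assms(1,5)] prefers_neq[OF assms(1,5)]
    by blast
  then show ?thesis unfolding util_def using assms(2) by (simp add: psubset_card_mono)
qed

lemma inj_on_util:
  assumes "distinct r" "finite X" "X \<subseteq> set r"
  shows "inj_on (\<lambda>y. util r y X) X"
  by (rule inj_onI) (use assms prefers_total util_less in \<open>metis less_irrefl subsetD\<close>)

lemma util_le_card:
  assumes "finite X" "x \<in> X"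
  shows "util r x X \<le> card X - 1"
proof -
  have "util r x X \<le> card (X - {x})" unfolding util_def
    by (rule card_mono) (use assms in auto)
  then show ?thesis using assms by simp
qed

lemma util_sum_lower_bound:
  assumes r: "r \<in> rankings C" and X: "finite X" "X \<subseteq> C" and x: "x \<in> X" and Z: "Z \<subseteq> X - {x}"
  defines "k \<equiv> real (card Z)"
  shows "k * (k + 1) - (if \<exists>y\<in>Z. prefers r x y then 2 * k * real (card X) else 0)
    \<le> 2 * real (\<Sum>y\<in>Z. util r y X) - 2 * k * real (util r x X)"
proof -
  have dr: "distinct r" and sr: "set r = C" using r unfolding rankings_def by auto
  have finZ: "finite Z" using X Z finite_subset by blast
  have inj: "inj_on (\<lambda>y. util r y X) Z"
    using inj_on_util[OF dr X(1)] X(2) sr Z by (meson Diff_subset inj_on_subset subset_trans)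
  show ?thesis
  proof (cases "\<exists>y\<in>Z. prefers r x y")
    case True
    have "k * (k - 1) \<le> 2 * real (\<Sum>y\<in>Z. util r y X)"
      using sum_inj_on_nat_lower_bound[OF finZ inj, of 0] unfolding k_def by simp
    moreover have "1 \<le> card X" using x X(1) by (auto simp: Suc_le_eq card_gt_0_iff)
    then have "real (util r x X) \<le> real (card X) - 1"
      using util_le_card[OF X(1) x, of r] by (metis of_nat_1 of_nat_diff of_nat_le_iff)
    then have "2 * k * real (util r x X) \<le> 2 * k * (real (card X) - 1)"
      unfolding k_def by (intro mult_left_mono) auto
    ultimately show ?thesis using True by (simp add: algebra_simps)
  next
    case False
    have "util r x X + 1 \<le> util r y X" if y: "y \<in> Z" for y
    proof -
      have "y \<noteq> x" "y \<in> set r" "x \<in> set r" "y \<in> X" using y Z x X(2) sr by auto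
      then have "prefers r y x" using False y prefers_total by metis
      then show ?thesis using util_less[OF dr X(1) \<open>y \<in> X\<close> x] by simp
    qed
    then have "k * (2 * real (util r x X + 1) + k - 1) \<le> 2 * real (\<Sum>y\<in>Z. util r y X)"
      unfolding k_def by (intro sum_inj_on_nat_lower_bound[OF finZ inj]) auto
    then show ?thesis using False by (simp add: algebra_simps)
  qed
qed

lemma Borda_winner_budget_bound:
  assumes C: "finite C" and XC: "X \<subseteq> C" and x: "x \<in> X" and Z: "Z \<subseteq> X - {x}" "Z \<noteq> {}"
    and b: "\<forall>r\<in>rankings C. 0 \<le> b r"
    and winner: "\<forall>y\<in>X. Util C b y X \<le> Util C b x X"
  shows "(real (card Z) + 1) * (\<Sum>r\<in>rankings C. b r)
     \<le> 2 * real (card X) * (\<Sum>r\<in>{r\<in>rankings C. \<exists>y\<in>Z. prefers r x y}. b r)"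
proof -
  define P where "P = {r\<in>rankings C. \<exists>y\<in>Z. prefers r x y}"
  define k where "k = real (card Z)"
  define n where "n = real (card X)"
  have finX: "finite X" using C XC finite_subset by auto
  have kpos: "k > 0"
    unfolding k_def using Z finX by (simp add: card_gt_0_iff finite_subset)
  have finRk: "finite (rankings C)" using finite_rankings[OF C] .
  have "(\<Sum>r\<in>rankings C. b r * (k * (k + 1) - (if r \<in> P then 2 * k * n else 0)))
      = (\<Sum>r\<in>rankings C. k * (k + 1) * b r - 2 * k * n * (if r \<in> P then b r else 0))"
    by (rule sum.cong) (auto simp: algebra_simps)
  also have "\<dots> = k * (k + 1) * (\<Sum>r\<in>rankings C. b r) - 2 * k * n * (\<Sum>r\<in>P. b r)"
    unfolding P_def using finRk by (simp add: sum_subtractf sum_distrib_left sum.inter_filter)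
  finally have lower: "(\<Sum>r\<in>rankings C. b r * (k * (k + 1) - (if r \<in> P then 2 * k * n else 0)))
      = k * ((k + 1) * (\<Sum>r\<in>rankings C. b r) - 2 * n * (\<Sum>r\<in>P. b r))"
    by (simp add: algebra_simps)
  have "(\<Sum>y\<in>Z. Util C b y X) \<le> (\<Sum>y\<in>Z. Util C b x X)"
    by (rule sum_mono) (use winner Z in auto)
  moreover have "(\<Sum>y\<in>Z. Util C b x X) = k * Util C b x X" unfolding k_def by simp
  moreover have "(\<Sum>y\<in>Z. Util C b y X) = (\<Sum>r\<in>rankings C. b r * real (\<Sum>y\<in>Z. util r y X))"
    unfolding Util_def of_nat_sum sum_distrib_left by (rule sum.swap)
  moreover have "(\<Sum>r\<in>rankings C. b r * (2 * real (\<Sum>y\<in>Z. util r y X) - 2 * k * real (util r x X)))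
      = 2 * (\<Sum>r\<in>rankings C. b r * real (\<Sum>y\<in>Z. util r y X)) - 2 * k * Util C b x X"
    unfolding Util_def by (simp only: right_diff_distrib sum_subtractf sum_distrib_left mult_ac)
  moreover have "(\<Sum>r\<in>rankings C. b r * (k * (k + 1) - (if r \<in> P then 2 * k * n else 0)))
      \<le> (\<Sum>r\<in>rankings C. b r * (2 * real (\<Sum>y\<in>Z. util r y X) - 2 * k * real (util r x X)))"
    using util_sum_lower_bound[OF _ finX XC x Z(1)] b
    unfolding k_def n_def P_def by (intro sum_mono mult_left_mono) auto
  ultimately have "k * ((k + 1) * (\<Sum>r\<in>rankings C. b r) - 2 * n * (\<Sum>r\<in>P. b r)) \<le> 0"
    using lower by linarith
  then show ?thesis
    using kpos unfolding k_def n_def P_def by (simp add: mult_le_0_iff)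
qed

section \<open>Maximum allocations and minimum cuts\<close>

definition within_budget :: "'r set \<Rightarrow> 'y set \<Rightarrow> ('r \<Rightarrow> 'y \<Rightarrow> bool) \<Rightarrow> ('r \<Rightarrow> real)
    \<Rightarrow> ('r \<Rightarrow> 'y \<Rightarrow> real) \<Rightarrow> bool" where
  "within_budget Rk Y E b g \<longleftrightarrow> (\<forall>r y. 0 \<le> g r y) \<and>
     (\<forall>r y. g r y \<noteq> 0 \<longrightarrow> r \<in> Rk \<and> y \<in> Y \<and> E r y) \<and> (\<forall>r\<in>Rk. (\<Sum>y\<in>Y. g r y) \<le> b r)"

definition is_allocation :: "'r set \<Rightarrow> 'y set \<Rightarrow> ('r \<Rightarrow> 'y \<Rightarrow> bool) \<Rightarrow> ('r \<Rightarrow> real)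
    \<Rightarrow> ('r \<Rightarrow> 'y \<Rightarrow> real) \<Rightarrow> bool" where
  "is_allocation Rk Y E b g \<longleftrightarrow> within_budget Rk Y E b g \<and> (\<forall>y\<in>Y. (\<Sum>r\<in>Rk. g r y) \<le> 1)"

definition allocation_value :: "'r set \<Rightarrow> 'y set \<Rightarrow> ('r \<Rightarrow> 'y \<Rightarrow> real) \<Rightarrow> real" where
  "allocation_value Rk Y g = (\<Sum>r\<in>Rk. \<Sum>y\<in>Y. g r y)"

definition max_allocation :: "'r set \<Rightarrow> 'y set \<Rightarrow> ('r \<Rightarrow> 'y \<Rightarrow> bool) \<Rightarrow> ('r \<Rightarrow> real)
    \<Rightarrow> ('r \<Rightarrow> 'y \<Rightarrow> real) \<Rightarrow> bool" where
  "max_allocation Rk Y E b g \<longleftrightarrow> is_allocation Rk Y E b g \<and>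
     (\<forall>g'. is_allocation Rk Y E b g' \<longrightarrow> allocation_value Rk Y g' \<le> allocation_value Rk Y g)"

text \<open>Reachability of \<open>y\<close> in the residual network of \<open>g\<close>, encoded without paths: some
  allocation within the budgets, ignoring the unit capacities of the candidates, raises the load
  of \<open>y\<close> and leaves every other load unchanged.\<close>

definition augmentable :: "'r set \<Rightarrow> 'y set \<Rightarrow> ('r \<Rightarrow> 'y \<Rightarrow> bool) \<Rightarrow> ('r \<Rightarrow> real)
    \<Rightarrow> ('r \<Rightarrow> 'y \<Rightarrow> real) \<Rightarrow> 'y \<Rightarrow> bool" where
  "augmentable Rk Y E b g y \<longleftrightarrow> y \<in> Y \<and> (\<exists>g' \<epsilon>. 0 < \<epsilon> \<and> within_budget Rk Y E b g' \<and>
     (\<forall>y0\<in>Y. (\<Sum>r\<in>Rk. g' r y0) = (\<Sum>r\<in>Rk. g r y0) + (if y0 = y then \<epsilon> else 0)))"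

lemma sum_convex_combination:
  fixes t :: real
  shows "(\<Sum>x\<in>A. (1 - t) * f x + t * f' x) = (1 - t) * sum f A + t * sum f' A"
  by (simp add: sum.distrib sum_distrib_left)

lemma within_budget_mix:
  assumes g: "within_budget Rk Y E b g" and g': "within_budget Rk Y E b g'" and t: "0 \<le> t" "t \<le> 1"
  shows "within_budget Rk Y E b (\<lambda>r y. (1 - t) * g r y + t * g' r y)"
proof -
  have "(\<Sum>y\<in>Y. (1 - t) * g r y + t * g' r y) \<le> b r" if r: "r \<in> Rk" for r
  proof -
    have "(1 - t) * (\<Sum>y\<in>Y. g r y) + t * (\<Sum>y\<in>Y. g' r y) \<le> (1 - t) * b r + t * b r"
      using g g' t r unfolding within_budget_def by (intro add_mono mult_left_mono) auto
    then show ?thesis unfolding sum_convex_combination by (simp add: algebra_simps)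
  qed
  moreover have "0 \<le> (1 - t) * g r y + t * g' r y" for r y
    using g g' t unfolding within_budget_def by simp
  moreover have "g r y \<noteq> 0 \<or> g' r y \<noteq> 0" if "(1 - t) * g r y + t * g' r y \<noteq> 0" for r y
    using that by auto
  ultimately show ?thesis using g g' unfolding within_budget_def by blast
qed

lemma within_budget_move:
  assumes fin: "finite Y" and g: "within_budget Rk Y E b g"
    and r: "r \<in> Rk" and y: "y \<in> Y" "E r y" and y': "y' \<in> Y" "E r y'" and \<delta>: "0 \<le> \<delta>" "\<delta> \<le> g r y"
  shows "within_budget Rk Y E b
    (\<lambda>r0 y0. g r0 y0 + (if r0 = r \<and> y0 = y' then \<delta> else 0) - (if r0 = r \<and> y0 = y then \<delta> else 0))"
proof -
  have "(\<Sum>y0\<in>Y. g r0 y0 + (if r0 = r \<and> y0 = y' then \<delta> else 0) - (if r0 = r \<and> y0 = y then \<delta> else 0))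
      = (\<Sum>y0\<in>Y. g r0 y0)" for r0
    using fin y y' by (cases "r0 = r") (simp_all add: sum.distrib sum_subtractf)
  then show ?thesis using g r y y' \<delta> unfolding within_budget_def by auto
qed

lemma augmentable_if_slack:
  assumes fin: "finite Rk" "finite Y" and g: "within_budget Rk Y E b g"
    and r: "r \<in> Rk" "(\<Sum>y\<in>Y. g r y) < b r" and y: "y \<in> Y" "E r y"
  shows "augmentable Rk Y E b g y"
proof -
  define \<epsilon> where "\<epsilon> = b r - (\<Sum>y\<in>Y. g r y)"
  define g' where "g' r0 y0 = g r0 y0 + (if r0 = r \<and> y0 = y then \<epsilon> else 0)" for r0 y0
  have "(\<Sum>y0\<in>Y. g' r0 y0) = (\<Sum>y0\<in>Y. g r0 y0) + (if r0 = r then \<epsilon> else 0)" for r0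
    using fin y unfolding g'_def by (cases "r0 = r") (simp_all add: sum.distrib)
  then have "within_budget Rk Y E b g'"
    using g r y unfolding within_budget_def g'_def \<epsilon>_def by auto
  moreover have "(\<Sum>r0\<in>Rk. g' r0 y0) = (\<Sum>r0\<in>Rk. g r0 y0) + (if y0 = y then \<epsilon> else 0)" for y0
    using fin r unfolding g'_def by (simp add: sum.distrib)
  moreover have "0 < \<epsilon>" using r unfolding \<epsilon>_def by simp
  ultimately show ?thesis unfolding augmentable_def using y by blast
qed

lemma augmentable_reroute:
  assumes fin: "finite Rk" "finite Y" and g: "within_budget Rk Y E b g"
    and aug: "augmentable Rk Y E b g y" and r: "r \<in> Rk" "0 < g r y" and y': "y' \<in> Y" "E r y'"
  shows "augmentable Rk Y E b g y'"
proof -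
  obtain g' \<epsilon> where y: "y \<in> Y" and \<epsilon>: "0 < \<epsilon>" and g': "within_budget Rk Y E b g'"
    and load: "\<forall>y0\<in>Y. (\<Sum>r\<in>Rk. g' r y0) = (\<Sum>r\<in>Rk. g r y0) + (if y0 = y then \<epsilon> else 0)"
    using aug unfolding augmentable_def by blast
  have Ery: "E r y" using g r unfolding within_budget_def by force
  \<comment> \<open>Mixing a little of the witness for \<open>y\<close> into \<open>g\<close> raises the load of \<open>y\<close> by \<open>\<delta>\<close>
    while \<open>r\<close> keeps at least \<open>\<delta>\<close> on \<open>y\<close>; moving that \<open>\<delta>\<close> to \<open>y'\<close> gives a witness for \<open>y'\<close>.\<close>
  define t where "t = min (1 / 2) (g r y / (2 * \<epsilon>))"
  define \<delta> where "\<delta> = t * \<epsilon>"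
  define g1 where "g1 r0 y0 = (1 - t) * g r0 y0 + t * g' r0 y0" for r0 y0
  have t: "0 < t" "t \<le> 1 / 2" using r \<epsilon> unfolding t_def by auto
  have g1: "within_budget Rk Y E b g1"
    unfolding g1_def using within_budget_mix[OF g g'] t by simp
  have "\<delta> \<le> g r y / 2" using \<epsilon> unfolding \<delta>_def t_def by (simp add: min_def field_simps)
  also have "\<dots> \<le> (1 - t) * g r y"
  proof -
    have "t * g r y \<le> 1 / 2 * g r y" using t(2) r(2) by (intro mult_right_mono) auto
    then show ?thesis by (simp add: algebra_simps)
  qed
  also have "\<dots> \<le> g1 r y" using g' t unfolding g1_def within_budget_def by simp
  finally have "\<delta> \<le> g1 r y" .
  moreover have "0 < \<delta>" using t \<epsilon> unfolding \<delta>_def by simp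
  ultimately have "within_budget Rk Y E b
    (\<lambda>r0 y0. g1 r0 y0 + (if r0 = r \<and> y0 = y' then \<delta> else 0) - (if r0 = r \<and> y0 = y then \<delta> else 0))"
    using within_budget_move[OF fin(2) g1 r(1) y Ery y'] by simp
  moreover have "(\<Sum>r0\<in>Rk. g1 r0 y0 + (if r0 = r \<and> y0 = y' then \<delta> else 0)
      - (if r0 = r \<and> y0 = y then \<delta> else 0)) = (\<Sum>r0\<in>Rk. g r0 y0) + (if y0 = y' then \<delta> else 0)"
    if "y0 \<in> Y" for y0
  proof -
    have "(\<Sum>r0\<in>Rk. g1 r0 y0) = (\<Sum>r0\<in>Rk. g r0 y0) + (if y0 = y then \<delta> else 0)"
      using load that unfolding g1_def \<delta>_def sum_convex_combination by (simp add: algebra_simps)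
    moreover have "(\<Sum>r0\<in>Rk. if r0 = r \<and> y0 = z then \<delta> else 0) = (if y0 = z then \<delta> else 0)" for z
      using fin r by (cases "y0 = z") simp_all
    ultimately show ?thesis by (simp add: sum.distrib sum_subtractf)
  qed
  ultimately show ?thesis unfolding augmentable_def using y' \<open>0 < \<delta>\<close> by blast
qed

lemma allocation_value_swap: "finite Rk \<Longrightarrow> finite Y \<Longrightarrow>
    allocation_value Rk Y g = (\<Sum>y\<in>Y. \<Sum>r\<in>Rk. g r y)"
  unfolding allocation_value_def by (rule sum.swap)

lemma augmentable_saturated:
  assumes fin: "finite Rk" "finite Y" and max: "max_allocation Rk Y E b g"
    and aug: "augmentable Rk Y E b g y"
  shows "1 \<le> (\<Sum>r\<in>Rk. g r y)"
proof (rule ccontr)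
  assume "\<not> 1 \<le> (\<Sum>r\<in>Rk. g r y)"
  obtain g' \<epsilon> where y: "y \<in> Y" and \<epsilon>: "0 < \<epsilon>" and g': "within_budget Rk Y E b g'"
    and load: "\<forall>y0\<in>Y. (\<Sum>r\<in>Rk. g' r y0) = (\<Sum>r\<in>Rk. g r y0) + (if y0 = y then \<epsilon> else 0)"
    using aug unfolding augmentable_def by blast
  have g: "is_allocation Rk Y E b g" using max unfolding max_allocation_def by blast
  define t where "t = min 1 ((1 - (\<Sum>r\<in>Rk. g r y)) / \<epsilon>)"
  define g1 where "g1 r0 y0 = (1 - t) * g r0 y0 + t * g' r0 y0" for r0 y0
  have t: "0 < t" "t \<le> 1" "t * \<epsilon> \<le> 1 - (\<Sum>r\<in>Rk. g r y)"
    using \<open>\<not> 1 \<le> _\<close> \<epsilon> unfolding t_def by (auto simp: min_def field_simps)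
  have load1: "(\<Sum>r\<in>Rk. g1 r y0) = (\<Sum>r\<in>Rk. g r y0) + (if y0 = y then t * \<epsilon> else 0)"
    if "y0 \<in> Y" for y0
    using load that unfolding g1_def sum_convex_combination by (simp add: algebra_simps)
  have "within_budget Rk Y E b g1"
    unfolding g1_def using within_budget_mix[OF _ g' less_imp_le[OF t(1)] t(2)] g
    unfolding is_allocation_def by blast
  moreover have "(\<Sum>r\<in>Rk. g1 r y0) \<le> 1" if "y0 \<in> Y" for y0
    using load1[OF that] g t(3) that unfolding is_allocation_def by auto
  ultimately have "is_allocation Rk Y E b g1" unfolding is_allocation_def by blast
  moreover have "allocation_value Rk Y g1 = allocation_value Rk Y g + t * \<epsilon>"
    using fin y load1 unfolding allocation_value_swap[OF fin] by (simp add: sum.distrib)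
  ultimately show False using max t(1) \<epsilon> unfolding max_allocation_def
    by (metis add_le_same_cancel1 mult_pos_pos not_le)
qed

lemma max_allocation_cut:
  assumes fin: "finite Rk" "finite Y" and max: "max_allocation Rk Y E b g"
  shows "\<exists>S\<subseteq>Y. real (card S) + (\<Sum>r\<in>{r\<in>Rk. \<exists>y\<in>Y - S. E r y}. b r) \<le> allocation_value Rk Y g"
proof -
  have g: "within_budget Rk Y E b g" using max unfolding max_allocation_def is_allocation_def by blast
  \<comment> \<open>A ranking approving a candidate outside \<open>S\<close> has no slack and sends nothing into \<open>S\<close>,
    since otherwise that candidate would be augmentable.\<close>
  define S where "S = {y\<in>Y. augmentable Rk Y E b g y}"
  define P where "P = {r\<in>Rk. \<exists>y\<in>Y - S. E r y}"
  have SY: "S \<subseteq> Y" unfolding S_def by auto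
  have tight: "(\<Sum>y\<in>Y - S. g r y) = b r" if "r \<in> P" for r
  proof -
    have r: "r \<in> Rk" using that unfolding P_def by auto
    have "\<not> (\<Sum>y\<in>Y. g r y) < b r" and "\<forall>y\<in>S. g r y = 0"
      using that g augmentable_if_slack[OF fin g r] augmentable_reroute[OF fin g _ r]
      unfolding P_def S_def within_budget_def by (auto simp: order_less_le)
    moreover have "(\<Sum>y\<in>Y. g r y) = (\<Sum>y\<in>S. g r y) + (\<Sum>y\<in>Y - S. g r y)"
      using fin SY by (metis add.commute sum.subset_diff)
    ultimately show ?thesis using g r unfolding within_budget_def by force
  qed
  have "real (card S) = (\<Sum>y\<in>S. 1)" by simp
  also have "\<dots> \<le> (\<Sum>y\<in>S. \<Sum>r\<in>Rk. g r y)"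
    using augmentable_saturated[OF fin max] unfolding S_def by (intro sum_mono) auto
  finally have "real (card S) \<le> (\<Sum>y\<in>S. \<Sum>r\<in>Rk. g r y)" .
  moreover have "(\<Sum>r\<in>P. b r) \<le> (\<Sum>y\<in>Y - S. \<Sum>r\<in>Rk. g r y)"
  proof -
    have "(\<Sum>r\<in>P. b r) = (\<Sum>r\<in>P. \<Sum>y\<in>Y - S. g r y)" using tight by simp
    also have "\<dots> \<le> (\<Sum>r\<in>Rk. \<Sum>y\<in>Y - S. g r y)"
      using g fin unfolding P_def within_budget_def by (intro sum_mono2) (auto intro: sum_nonneg)
    also have "\<dots> = (\<Sum>y\<in>Y - S. \<Sum>r\<in>Rk. g r y)" by (rule sum.swap)
    finally show ?thesis .
  qed
  moreover have "allocation_value Rk Y g = (\<Sum>y\<in>S. \<Sum>r\<in>Rk. g r y) + (\<Sum>y\<in>Y - S. \<Sum>r\<in>Rk. g r y)"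
    using fin SY unfolding allocation_value_swap[OF fin] by (metis add.commute sum.subset_diff)
  ultimately show ?thesis using SY unfolding P_def by (intro exI[of _ S]) auto
qed

section \<open>The flow network of a round\<close>

lemma sum_netV:
  assumes "finite C" "finite X"
  shows "(\<Sum>v\<in>netV C X x. \<phi> v)
    = \<phi> Src + \<phi> Snk + (\<Sum>r\<in>rankings C. \<phi> (RkV r)) + (\<Sum>y\<in>X - {x}. \<phi> (CdV y))"
proof -
  have fin: "finite (RkV ` rankings C \<union> CdV ` (X - {x}))"
    using finite_rankings assms by blast
  have "netV C X x = insert Src (insert Snk (RkV ` rankings C \<union> CdV ` (X - {x})))"
    unfolding netV_def by auto
  moreover have "(\<Sum>v\<in>RkV ` rankings C \<union> CdV ` (X - {x}). \<phi> v)
      = (\<Sum>r\<in>rankings C. \<phi> (RkV r)) + (\<Sum>y\<in>X - {x}. \<phi> (CdV y))"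
    using fin by (subst sum.union_disjoint) (auto simp: sum.reindex inj_on_def)
  moreover have "Src \<notin> insert Snk (RkV ` rankings C \<union> CdV ` (X - {x}))"
    and "Snk \<notin> RkV ` rankings C \<union> CdV ` (X - {x})" by auto
  ultimately show ?thesis using fin by (simp add: algebra_simps)
qed

lemma netE_iff:
  "(Src, v) \<in> netE C X x \<longleftrightarrow> (\<exists>r. v = RkV r \<and> r \<in> rankings C)"
  "(u, Src) \<notin> netE C X x"
  "(Snk, v) \<notin> netE C X x"
  "(u, Snk) \<in> netE C X x \<longleftrightarrow> (\<exists>y. u = CdV y \<and> y \<in> X - {x})"
  "(RkV r, v) \<in> netE C X x \<longleftrightarrow> (\<exists>y. v = CdV y \<and> r \<in> rankings C \<and> y \<in> X - {x} \<and> prefers r x y)"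
  "(u, RkV r) \<in> netE C X x \<longleftrightarrow> u = Src \<and> r \<in> rankings C"
  "(CdV y, v) \<in> netE C X x \<longleftrightarrow> v = Snk \<and> y \<in> X - {x}"
  "(u, CdV y) \<in> netE C X x \<longleftrightarrow> (\<exists>r. u = RkV r \<and> r \<in> rankings C \<and> y \<in> X - {x} \<and> prefers r x y)"
  unfolding netE_def by auto

context
  fixes C :: "'a set" and X :: "'a set" and x :: 'a and b :: "'a list \<Rightarrow> real"
    and f :: "'a vtx \<times> 'a vtx \<Rightarrow> real"
  assumes finite: "finite C" "finite X"
    and flow: "is_flow (netV C X x) (netE C X x) (netCap b) Src Snk f"
begin

lemma flow_zero: "e \<notin> netE C X x \<Longrightarrow> f e = 0"
  using flow unfolding is_flow_def by blast

lemma flow_capacity: "e \<in> netE C X x \<Longrightarrow> 0 \<le> f e \<and> ereal (f e) \<le> netCap b e"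
  using flow unfolding is_flow_def by blast

lemma flow_conservation:
  "v \<in> netV C X x - {Src, Snk} \<Longrightarrow> (\<Sum>u\<in>netV C X x. f (u, v)) = (\<Sum>w\<in>netV C X x. f (v, w))"
  using flow unfolding is_flow_def by blast

lemma flow_from_source:
  assumes "r \<in> rankings C"
  shows "f (Src, RkV r) = (\<Sum>y\<in>X - {x}. f (RkV r, CdV y))"
  using flow_conservation[of "RkV r"] assms
  unfolding sum_netV[OF finite] by (simp add: netV_def flow_zero netE_iff)

lemma flow_allocation:
  "is_allocation (rankings C) (X - {x}) (\<lambda>r y. prefers r x y) b (\<lambda>r y. f (RkV r, CdV y))"
proof -
  have "0 \<le> f (RkV r, CdV y)" for r y
    using flow_zero flow_capacity by (cases "(RkV r, CdV y) \<in> netE C X x") auto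
  moreover have "r \<in> rankings C \<and> y \<in> X - {x} \<and> prefers r x y" if "f (RkV r, CdV y) \<noteq> 0" for r y
  proof -
    have "(RkV r, CdV y) \<in> netE C X x" using that flow_zero by blast
    then show ?thesis by (simp add: netE_iff)
  qed
  moreover have "(\<Sum>y\<in>X - {x}. f (RkV r, CdV y)) \<le> b r" if "r \<in> rankings C" for r
    using that flow_capacity[of "(Src, RkV r)"] by (simp add: flow_from_source netE_iff)
  moreover have "(\<Sum>r\<in>rankings C. f (RkV r, CdV y)) \<le> 1" if y: "y \<in> X - {x}" for y
  proof -
    have "(\<Sum>r\<in>rankings C. f (RkV r, CdV y)) = f (CdV y, Snk)"
      using y flow_conservation[of "CdV y"]
      unfolding sum_netV[OF finite] by (simp add: netV_def flow_zero netE_iff)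
    then show ?thesis using y flow_capacity[of "(CdV y, Snk)"] by (simp add: netE_iff)
  qed
  ultimately show ?thesis unfolding is_allocation_def within_budget_def by blast
qed

lemma flow_value_eq_allocation_value:
  "flow_value (netV C X x) Src f = allocation_value (rankings C) (X - {x}) (\<lambda>r y. f (RkV r, CdV y))"
proof -
  have "flow_value (netV C X x) Src f = (\<Sum>r\<in>rankings C. f (Src, RkV r))"
    unfolding flow_value_def sum_netV[OF finite] by (simp add: flow_zero netE_iff)
  also have "\<dots> = allocation_value (rankings C) (X - {x}) (\<lambda>r y. f (RkV r, CdV y))"
    unfolding allocation_value_def by (rule sum.cong) (simp_all add: flow_from_source)
  finally show ?thesis .
qed

end

fun allocation_flow :: "'a list set \<Rightarrow> 'a set \<Rightarrow> ('a list \<Rightarrow> 'a \<Rightarrow> real) \<Rightarrow> 'a vtx \<times> 'a vtx \<Rightarrow> real" where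
  "allocation_flow Rk Y g (Src, RkV r) = (if r \<in> Rk then (\<Sum>y\<in>Y. g r y) else 0)"
| "allocation_flow Rk Y g (RkV r, CdV y) = g r y"
| "allocation_flow Rk Y g (CdV y, Snk) = (if y \<in> Y then (\<Sum>r\<in>Rk. g r y) else 0)"
| "allocation_flow Rk Y g _ = 0"

lemma allocation_flow_is_flow:
  assumes finite: "finite C" "finite X"
    and g: "is_allocation (rankings C) (X - {x}) (\<lambda>r y. prefers r x y) b g"
  shows "is_flow (netV C X x) (netE C X x) (netCap b) Src Snk (allocation_flow (rankings C) (X - {x}) g)"
    and "flow_value (netV C X x) Src (allocation_flow (rankings C) (X - {x}) g)
      = allocation_value (rankings C) (X - {x}) g"
proof -
  let ?f = "allocation_flow (rankings C) (X - {x}) g"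
  have nonneg: "\<And>r y. 0 \<le> g r y"
    and support: "\<And>r y. g r y \<noteq> 0 \<Longrightarrow> r \<in> rankings C \<and> y \<in> X - {x} \<and> prefers r x y"
    and rows: "\<And>r. r \<in> rankings C \<Longrightarrow> (\<Sum>y\<in>X - {x}. g r y) \<le> b r"
    and columns: "\<And>y. y \<in> X - {x} \<Longrightarrow> (\<Sum>r\<in>rankings C. g r y) \<le> 1"
    using g unfolding is_allocation_def within_budget_def by auto
  have "?f (u, v) = 0" if "(u, v) \<notin> netE C X x" for u v
    using that support by (cases u; cases v) (auto simp: netE_iff)
  moreover have "0 \<le> ?f (u, v) \<and> ereal (?f (u, v)) \<le> netCap b (u, v)" if "(u, v) \<in> netE C X x" for u v
    using that nonneg rows columns by (cases u; cases v) (auto simp: netE_iff intro: sum_nonneg)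
  moreover have "(\<Sum>u\<in>netV C X x. ?f (u, v)) = (\<Sum>w\<in>netV C X x. ?f (v, w))"
    if "v \<in> netV C X x - {Src, Snk}" for v
  proof -
    from that consider r where "r \<in> rankings C" "v = RkV r" | y where "y \<in> X - {x}" "v = CdV y"
      unfolding netV_def by auto
    then show ?thesis by cases (simp_all add: sum_netV[OF finite])
  qed
  ultimately show "is_flow (netV C X x) (netE C X x) (netCap b) Src Snk ?f"
    unfolding is_flow_def by auto
  show "flow_value (netV C X x) Src ?f = allocation_value (rankings C) (X - {x}) g"
    unfolding flow_value_def sum_netV[OF finite] allocation_value_def by simp
qed

lemma max_flow_max_allocation:
  assumes finite: "finite C" "finite X"
    and max: "is_max_flow (netV C X x) (netE C X x) (netCap b) Src Snk f"
  shows "max_allocation (rankings C) (X - {x}) (\<lambda>r y. prefers r x y) b (\<lambda>r y. f (RkV r, CdV y))"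
proof -
  have flow: "is_flow (netV C X x) (netE C X x) (netCap b) Src Snk f"
    using max unfolding is_max_flow_def by blast
  have "allocation_value (rankings C) (X - {x}) g \<le> flow_value (netV C X x) Src f"
    if "is_allocation (rankings C) (X - {x}) (\<lambda>r y. prefers r x y) b g" for g
    using allocation_flow_is_flow[OF finite that] max unfolding is_max_flow_def by metis
  then show ?thesis
    using flow_allocation[OF finite flow] flow_value_eq_allocation_value[OF finite flow]
    unfolding max_allocation_def by simp
qed

section \<open>The value of a maximum flow\<close>

lemma two_choose_two: "2 * real (n choose 2) = real n * (real n - 1)"
proof (induction n)
  case (Suc n)
  have "Suc n choose 2 = n + (n choose 2)"
    by (simp add: numeral_2_eq_2)
  with Suc show ?case by (simp add: algebra_simps)
qed simp

lemma cut_weight_lower_bound: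
  fixes n k :: nat and B W :: real
  assumes k: "1 \<le> k" "k < n" and B: "B < real (n choose 2) + 1"
    and W: "(real k + 1) * B \<le> 2 * real n * W"
  shows "real k - 1 + (B - real (n choose 2)) < W"
proof -
  define c where "c = real (n choose 2)"
  have "4 * real n * real k \<le> (real k + 1) * (real n * (real n - 1) + 2)"
  proof (cases "n \<ge> 5")
    case True
    then have "real n * 4 \<le> real n * (real n - 1)"
      by (intro mult_left_mono) auto
    then have "(real k + 1) * (4 * real n) \<le> (real k + 1) * (real n * (real n - 1) + 2)"
      by (intro mult_left_mono) auto
    then show ?thesis by (simp add: algebra_simps)
  next
    case False
    with k have "n = 2 \<and> k = 1 \<or> n = 3 \<and> (k = 1 \<or> k = 2) \<or> n = 4 \<and> (k = 1 \<or> k = 2 \<or> k = 3)"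
      by auto
    then show ?thesis by auto
  qed
  moreover have "(real k + 1) * (real n * (real n - 1) + 2) = 2 * ((real k + 1) * (c + 1))"
    unfolding c_def two_choose_two[symmetric] by (simp add: algebra_simps)
  ultimately have "2 * real n * real k \<le> (real k + 1) * (c + 1)"
    by linarith
  moreover have "(2 * real n - real k - 1) * B < (2 * real n - real k - 1) * (c + 1)"
    using k B unfolding c_def by (intro mult_strict_left_mono) auto
  ultimately have "2 * real n * (real k - 1 + (B - c)) < 2 * real n * W"
    using W by (simp add: algebra_simps)
  then show ?thesis unfolding c_def using k by (simp add: mult_less_cancel_left_pos)
qed

lemma Borda_max_allocation_value_bounds:
  assumes C: "finite C" and XC: "X \<subseteq> C" and x: "x \<in> X"
    and b: "\<forall>r\<in>rankings C. 0 \<le> b r"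
    and winner: "\<forall>y\<in>X. Util C b y X \<le> Util C b x X"
    and max: "max_allocation (rankings C) (X - {x}) (\<lambda>r y. prefers r x y) b g"
    and budget: "(\<Sum>r\<in>rankings C. b r) < real (card X choose 2) + 1"
  defines "V \<equiv> allocation_value (rankings C) (X - {x}) g"
  shows "V \<le> real (card X) - 1"
    and "real (card X) - 2 + ((\<Sum>r\<in>rankings C. b r) - real (card X choose 2)) < V"
proof -
  define Y where "Y = X - {x}"
  define n where "n = card X"
  have finX: "finite X" using C XC finite_subset by blast
  have finY: "finite Y" unfolding Y_def using finX by blast
  have finRk: "finite (rankings C)" using finite_rankings[OF C] .
  have n: "1 \<le> n" "card Y = n - 1"
    unfolding n_def Y_def using x finX by (auto simp: Suc_le_eq card_gt_0_iff)
  have g: "is_allocation (rankings C) Y (\<lambda>r y. prefers r x y) b g"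
    using max unfolding max_allocation_def Y_def by blast
  have "V = (\<Sum>y\<in>Y. \<Sum>r\<in>rankings C. g r y)"
    unfolding V_def Y_def allocation_value_swap[OF finRk finY[unfolded Y_def]] ..
  also have "\<dots> \<le> (\<Sum>y\<in>Y. 1)"
    using g unfolding is_allocation_def by (intro sum_mono) auto
  finally show "V \<le> real (card X) - 1" using n unfolding n_def by (simp add: of_nat_diff)
  obtain S where SY: "S \<subseteq> Y"
    and cut: "real (card S) + (\<Sum>r\<in>{r\<in>rankings C. \<exists>y\<in>Y - S. prefers r x y}. b r) \<le> V"
    using max_allocation_cut[OF finRk finY max[folded Y_def]] unfolding V_def Y_def by blast
  define W where "W = (\<Sum>r\<in>{r\<in>rankings C. \<exists>y\<in>Y - S. prefers r x y}. b r)"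
  define k where "k = card (Y - S)"
  have "card S + k = n - 1"
    using SY finY n card_mono[OF finY SY] unfolding k_def
    by (simp add: card_Diff_subset finite_subset)
  then have card_S: "real (card S) = real n - 1 - real k"
    using n(1) by (simp add: of_nat_diff flip: of_nat_add)
  show "real (card X) - 2 + ((\<Sum>r\<in>rankings C. b r) - real (card X choose 2)) < V"
  proof (cases "Y - S = {}")
    case True
    have "0 \<le> W" unfolding W_def using b by (auto intro: sum_nonneg)
    then show ?thesis using cut card_S budget True unfolding W_def k_def n_def by simp
  next
    case False
    have "k < n" "1 \<le> k"
      using n finY False card_mono[OF finY, of "Y - S"] unfolding k_def
      by (auto simp: Suc_le_eq card_gt_0_iff)
    moreover have "(real k + 1) * (\<Sum>r\<in>rankings C. b r) \<le> 2 * real n * W"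
      using Borda_winner_budget_bound[OF C XC x _ False b winner] unfolding k_def n_def W_def Y_def
      by blast
    ultimately have "real k - 1 + ((\<Sum>r\<in>rankings C. b r) - real (n choose 2)) < W"
      using cut_weight_lower_bound budget unfolding n_def by blast
    then show ?thesis using cut card_S unfolding W_def n_def by linarith
  qed
qed

section \<open>Runs of the rule\<close>

locale FA_Borda_execution =
  fixes C :: "'a set" and R :: "'a list \<Rightarrow> real" and xs :: "'a list"
    and b :: "nat \<Rightarrow> 'a list \<Rightarrow> real"
  assumes finite_C: "finite C" and profile: "is_profile C R" and run: "FA_Borda_run C R xs b"
begin

definition remaining :: "nat \<Rightarrow> 'a set" where
  "remaining i = C - set (take i xs)"

definition round_flow :: "nat \<Rightarrow> 'a vtx \<times> 'a vtx \<Rightarrow> real" where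
  "round_flow i = (SOME f.
     is_max_flow (netV C (remaining i) (xs ! i)) (netE C (remaining i) (xs ! i)) (netCap (b i)) Src Snk f
     \<and> (\<forall>r. b (Suc i) r = b i r - f (Src, RkV r)))"

definition alloc :: "nat \<Rightarrow> 'a list \<Rightarrow> 'a \<Rightarrow> real" where
  "alloc i r y = round_flow i (RkV r, CdV y)"

lemma length_xs: "length xs = card C"
  using run unfolding FA_Borda_run_def by blast

lemma initial_budget: "b 0 r = R r * real (card C choose 2)"
  using run unfolding FA_Borda_run_def by simp

lemma round:
  assumes "i < card C"
  shows "xs ! i \<in> remaining i"
    and "\<forall>y\<in>remaining i. Util C (b i) y (remaining i) \<le> Util C (b i) (xs ! i) (remaining i)"
    and "is_max_flow (netV C (remaining i) (xs ! i)) (netE C (remaining i) (xs ! i)) (netCap (b i))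
      Src Snk (round_flow i)"
    and "b (Suc i) r = b i r - round_flow i (Src, RkV r)"
proof -
  define P where "P f \<longleftrightarrow> is_max_flow (netV C (remaining i) (xs ! i)) (netE C (remaining i) (xs ! i))
      (netCap (b i)) Src Snk f \<and> (\<forall>r. b (Suc i) r = b i r - f (Src, RkV r))" for f
  have step: "xs ! i \<in> remaining i \<and>
      (\<forall>y\<in>remaining i. Util C (b i) y (remaining i) \<le> Util C (b i) (xs ! i) (remaining i)) \<and>
      (\<exists>f. P f)"
    using conjunct2[OF conjunct2[OF run[unfolded FA_Borda_run_def]], rule_format, OF assms]
    unfolding Let_def remaining_def P_def .
  then show "xs ! i \<in> remaining i"
    and "\<forall>y\<in>remaining i. Util C (b i) y (remaining i) \<le> Util C (b i) (xs ! i) (remaining i)"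
    by blast+
  have "round_flow i = (SOME f. P f)" unfolding round_flow_def P_def ..
  then have "P (round_flow i)" using step someI_ex[of P] by simp
  then show "is_max_flow (netV C (remaining i) (xs ! i)) (netE C (remaining i) (xs ! i)) (netCap (b i))
      Src Snk (round_flow i)"
    and "b (Suc i) r = b i r - round_flow i (Src, RkV r)"
    unfolding P_def by blast+
qed

lemma distinct_xs: "distinct xs"
proof -
  have "xs ! i \<noteq> xs ! j" if "i < j" "j < card C" for i j
  proof -
    have "xs ! i \<in> set (take j xs)" using that length_xs by (auto simp: in_set_conv_nth)
    then show ?thesis using round(1)[OF that(2)] unfolding remaining_def by auto
  qed
  then show ?thesis
    unfolding distinct_conv_nth length_xs by (metis linorder_neqE_nat)
qed

lemma set_xs: "set xs = C"
proof -
  have "set xs \<subseteq> C"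
    using round(1) length_xs unfolding remaining_def by (auto simp: in_set_conv_nth)
  moreover have "card (set xs) = card C" using distinct_xs length_xs distinct_card by metis
  ultimately show ?thesis using finite_C card_subset_eq by blast
qed

lemma remaining_eq_drop: "remaining i = set (drop i xs)"
proof -
  have "set xs = set (take i xs) \<union> set (drop i xs)" by (metis append_take_drop_id set_append)
  moreover have "set (take i xs) \<inter> set (drop i xs) = {}"
    using distinct_xs by (metis append_take_drop_id distinct_append)
  ultimately show ?thesis unfolding remaining_def using set_xs by auto
qed

lemma card_remaining: "card (remaining i) = card C - i"
  unfolding remaining_eq_drop using distinct_xs length_xs by (simp add: distinct_card)

lemma remaining_subset: "remaining i \<subseteq> C"
  unfolding remaining_def by auto

lemma finite_remaining: "finite (remaining i)"
  using finite_C remaining_subset finite_subset by blast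

lemma remaining_minus_chosen:
  assumes "i < card C"
  shows "remaining i - {xs ! i} = (\<lambda>j. xs ! j) ` {i<..<card C}"
proof -
  have "{i..<card C} = insert i {i<..<card C}" using assms by auto
  then have "remaining i = insert (xs ! i) ((\<lambda>j. xs ! j) ` {i<..<card C})"
    unfolding remaining_eq_drop set_drop_eq_image_nth length_xs by simp
  moreover have "xs ! i \<notin> (\<lambda>j. xs ! j) ` {i<..<card C}"
    using distinct_xs length_xs by (auto simp: nth_eq_iff_index_eq)
  ultimately show ?thesis by auto
qed

lemma max_allocation_round:
  assumes "i < card C"
  shows "max_allocation (rankings C) (remaining i - {xs ! i}) (\<lambda>r y. prefers r (xs ! i) y) (b i) (alloc i)"
  using max_flow_max_allocation[OF finite_C finite_remaining round(3)[OF assms]]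
  unfolding alloc_def[abs_def] .

lemma budget_Suc:
  assumes "i < card C" "r \<in> rankings C"
  shows "b (Suc i) r = b i r - (\<Sum>y\<in>remaining i - {xs ! i}. alloc i r y)"
proof -
  have "is_flow (netV C (remaining i) (xs ! i)) (netE C (remaining i) (xs ! i)) (netCap (b i))
      Src Snk (round_flow i)"
    using round(3)[OF assms(1)] unfolding is_max_flow_def by blast
  then show ?thesis
    using round(4)[OF assms(1)] flow_from_source[OF finite_C finite_remaining _ assms(2)]
    unfolding alloc_def by simp
qed

lemma total_initial_budget: "(\<Sum>r\<in>rankings C. b 0 r) = real (card C choose 2)"
  using profile unfolding is_profile_def initial_budget by (simp flip: sum_distrib_right)

lemma budget_bounds:
  assumes "i \<le> card C"
  shows "(\<forall>r\<in>rankings C. 0 \<le> b i r) \<and> real (card C - i choose 2) \<le> (\<Sum>r\<in>rankings C. b i r)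
    \<and> (\<Sum>r\<in>rankings C. b i r) < real (card C - i choose 2) + 1"
  using assms
proof (induction i)
  case 0
  then show ?case using profile total_initial_budget unfolding is_profile_def initial_budget by simp
next
  case (Suc i)
  then have i: "i < card C" by simp
  note IH = Suc.IH[OF less_imp_le[OF i]]
  define p where "p = card C - Suc i"
  define V where "V = allocation_value (rankings C) (remaining i - {xs ! i}) (alloc i)"
  have ci: "card C - i = Suc p" unfolding p_def using i by simp
  have n: "card (remaining i) = Suc p" unfolding card_remaining ci ..
  have choose: "real (Suc p choose 2) = real p + real (p choose 2)"
    by (simp add: numeral_2_eq_2)
  note max = max_allocation_round[OF i]
  have "V \<le> real p"
    and "real p - 1 + ((\<Sum>r\<in>rankings C. b i r) - real (Suc p choose 2)) < V"
    using Borda_max_allocation_value_bounds[OF finite_C remaining_subset round(1)[OF i] _ round(2)[OF i] max]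
      IH n unfolding V_def ci by auto
  moreover have "(\<Sum>r\<in>rankings C. b (Suc i) r) = (\<Sum>r\<in>rankings C. b i r) - V"
    unfolding V_def allocation_value_def by (simp add: budget_Suc[OF i] sum_subtractf)
  moreover have "\<forall>r\<in>rankings C. 0 \<le> b (Suc i) r"
    using max unfolding max_allocation_def is_allocation_def within_budget_def
    by (simp add: budget_Suc[OF i])
  ultimately show ?case using IH choose unfolding ci Suc_diff_Suc[OF i] p_def[symmetric] by auto
qed

definition price :: "'a list \<Rightarrow> 'a \<times> 'a \<Rightarrow> real" where
  "price r p = (\<Sum>i<card C. if xs ! i = fst p then alloc i r (snd p) else 0)"

lemma price_nth:
  assumes "i < card C"
  shows "price r (xs ! i, y) = alloc i r y"
proof -
  have "price r (xs ! i, y) = (\<Sum>j<card C. if j = i then alloc j r y else 0)"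
    unfolding price_def using assms distinct_xs length_xs
    by (intro sum.cong) (auto simp: nth_eq_iff_index_eq)
  then show ?thesis using assms by simp
qed

lemma pairs_of_xsE:
  assumes "p \<in> pairs_of xs"
  obtains i y where "i < card C" "y \<in> remaining i - {xs ! i}" "p = (xs ! i, y)"
proof -
  obtain i j where ij: "i < j" "j < card C" "p = (xs ! i, xs ! j)"
    using assms length_xs by (elim pairs_ofE) auto
  then have "i < card C" "xs ! j \<in> remaining i - {xs ! i}"
    using remaining_minus_chosen[of i] by auto
  then show ?thesis using that ij(3) by blast
qed

lemma alloc_nonneg: "i < card C \<Longrightarrow> 0 \<le> alloc i r y"
  using max_allocation_round unfolding max_allocation_def is_allocation_def within_budget_def by blast

lemma alloc_support:
  "i < card C \<Longrightarrow> alloc i r y \<noteq> 0 \<Longrightarrow> r \<in> rankings C \<and> y \<in> remaining i - {xs ! i} \<and> prefers r (xs ! i) y"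
  using max_allocation_round unfolding max_allocation_def is_allocation_def within_budget_def by blast

lemma alloc_load:
  "i < card C \<Longrightarrow> y \<in> remaining i - {xs ! i} \<Longrightarrow> (\<Sum>r\<in>rankings C. alloc i r y) \<le> 1"
  using max_allocation_round unfolding max_allocation_def is_allocation_def by blast

lemma alloc_le_one:
  assumes "i < card C"
  shows "alloc i r y \<le> 1"
proof (cases "alloc i r y = 0")
  case False
  then have "r \<in> rankings C" "y \<in> remaining i - {xs ! i}" using alloc_support[OF assms] by auto
  then have "alloc i r y \<le> (\<Sum>r\<in>rankings C. alloc i r y)"
    using alloc_nonneg[OF assms] finite_rankings[OF finite_C] by (intro member_le_sum) auto
  then show ?thesis using alloc_load[OF assms \<open>y \<in> _\<close>] by linarith
qed simp

lemma price_nonneg: "0 \<le> price r p"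
  unfolding price_def by (intro sum_nonneg) (simp add: alloc_nonneg)

lemma price_le_one: "p \<in> pairs_of xs \<Longrightarrow> price r p \<le> 1"
  by (elim pairs_of_xsE) (simp add: price_nth alloc_le_one)

lemma price_le_util:
  assumes "(u, v) \<in> pairs_of xs"
  shows "price r (u, v) \<le> real (util r u {u, v})"
proof -
  obtain i where i: "i < card C" "v \<in> remaining i - {xs ! i}" "u = xs ! i"
    using assms by (elim pairs_of_xsE) auto
  show ?thesis
  proof (cases "alloc i r v = 0")
    case False
    then have "prefers r u v" using alloc_support[OF i(1)] i by blast
    then have "{z \<in> {u, v} - {u}. prefers r u z} = {v}" using i by auto
    then show ?thesis using alloc_le_one[OF i(1)] i unfolding util_def by (simp add: price_nth)
  qed (simp add: i price_nth)
qed

lemma price_column_sum: "p \<in> pairs_of xs \<Longrightarrow> (\<Sum>r\<in>rankings C. price r p) \<le> 1"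
  by (elim pairs_of_xsE) (simp add: price_nth alloc_load)

lemma price_row_sum:
  assumes r: "r \<in> rankings C"
  shows "(\<Sum>p\<in>pairs_of xs. price r p) = b 0 r - b (card C) r"
proof -
  have "(\<Sum>p\<in>pairs_of xs. price r p) = (\<Sum>i<card C. \<Sum>j\<in>{i<..<card C}. price r (xs ! i, xs ! j))"
    using sum_pairs_of[OF distinct_xs, of "price r"] unfolding length_xs .
  also have "\<dots> = (\<Sum>i<card C. \<Sum>j\<in>{i<..<card C}. alloc i r (xs ! j))"
    by (intro sum.cong refl) (simp add: price_nth)
  also have "\<dots> = (\<Sum>i<card C. b i r - b (Suc i) r)"
  proof (rule sum.cong)
    fix i assume "i \<in> {..<card C}"
    then have i: "i < card C" by simp
    have "(\<Sum>j\<in>{i<..<card C}. alloc i r (xs ! j)) = (\<Sum>y\<in>remaining i - {xs ! i}. alloc i r y)"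
      unfolding remaining_minus_chosen[OF i] using distinct_xs length_xs
      by (intro sum.reindex[symmetric, unfolded comp_def]) (auto simp: inj_on_def nth_eq_iff_index_eq)
    then show "(\<Sum>j\<in>{i<..<card C}. alloc i r (xs ! j)) = b i r - b (Suc i) r"
      using budget_Suc[OF i r] by simp
  qed simp
  also have "\<dots> = b 0 r - b (card C) r" by (rule sum_lessThan_telescope')
  finally show ?thesis .
qed

lemma pair_priceable: "pair_priceable C R xs"
  unfolding pair_priceable_def
proof (intro exI[of _ price] conjI ballI)
  note final = budget_bounds[of "card C", simplified]
  show "0 \<le> price r p" for r p by (rule price_nonneg)
  show "price r p \<le> 1" if "p \<in> pairs_of xs" for r p using that by (rule price_le_one)
  show "case p of (x, y) \<Rightarrow> price r (x, y) \<le> real (util r x {x, y})" if "p \<in> pairs_of xs" for r p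
    using that price_le_util by (cases p) simp
  show "(\<Sum>p\<in>pairs_of xs. price r p) \<le> real (card C choose 2) * R r" if "r \<in> rankings C" for r
    using that final price_row_sum[OF that] initial_budget[of r] by simp
  show "(\<Sum>r\<in>rankings C. price r p) \<le> 1" if "p \<in> pairs_of xs" for p
    using that by (rule price_column_sum)
  have "(\<Sum>r\<in>rankings C. \<Sum>p\<in>pairs_of xs. price r p)
      = (\<Sum>r\<in>rankings C. b 0 r) - (\<Sum>r\<in>rankings C. b (card C) r)"
    by (simp add: price_row_sum sum_subtractf)
  then show "real (card C choose 2) - 1 < (\<Sum>r\<in>rankings C. \<Sum>p\<in>pairs_of xs. price r p)"
    using final total_initial_budget by (simp add: numeral_2_eq_2)
qed

end

theorem mainTheorem11:
  fixes C :: "'a set" and R :: "'a list \<Rightarrow> real" and xs :: "'a list"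
  assumes "finite C"
    and "is_profile C R"
    and "FA_Borda C R xs"
  shows "pair_priceable C R xs"
proof -
  obtain b where "FA_Borda_run C R xs b" using assms(3) unfolding FA_Borda_def by blast
  then interpret FA_Borda_execution C R xs b using assms(1,2) by unfold_locales
  show ?thesis by (rule pair_priceable)
qed

end
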